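(* Let $G_N$ be the Poissonian random graph with capacities $\lambda_1,\dots,\lambda_N$, and let $A_1\ne A_2$ be two distinct nodes. Fix integers $k,t\ge0$. Conditionally on $\mathcal N^{(1)}_k$ and $\mathcal N^{(2)}_t$ and given that $\mathcal N^{(1)}_k\cap\mathcal N^{(2)}_t=\emptyset$, the number of edges between the nodes of $\partial\mathcal N^{(1)}_k$ and the nodes of $\partial\mathcal N^{(2)}_t$ is Poisson distributed with mean $$\frac{\underline C^{(1)}_{k+1}\,\underline C^{(2)}_{t+1}}{l_N},\qquad\text{where } \underline C^{(1)}_{k+1}=\sum_{i\in\partial\mathcal N^{(1)}_k}\lambda_i,\ \ \underline C^{(2)}_{t+1}=\sum_{j\in\partial\mathcal N^{(2)}_t}\lambda_j.$$
   Context: Poissonian random graph: on nodes $\{1,\dots,N\}$ with capacities $\lambda_i>0$ and $l_N=\sum_i\lambda_i$, the numbers of edges $E_{ij}$ between distinct nodes $i,j$ are independent Poisson random variables with mean $\lambda_i\lambda_j/l_N$ (multiple edges allowed). For a node $A_i$, $\partial\mathcal N^{(i)}_k=\{j: d(A_i,j)=k\}$ and $\mathcal N^{(i)}_k=\{j: d(A_i,j)\le k\}$, with $d$ the graph distance. *)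

theory Defs
  imports "HOL-Probability.Probability"
begin

text \<open>Nodes are 1..N. A realisation of the multigraph is a function
  g :: nat \<times> nat \<Rightarrow> nat giving the number of edges g (i,j) between i < j.\<close>

definition node_pairs :: "nat \<Rightarrow> (nat \<times> nat) set" where
  "node_pairs N = {(i, j). 1 \<le> i \<and> i < j \<and> j \<le> N}"

definition total_cap :: "nat \<Rightarrow> (nat \<Rightarrow> real) \<Rightarrow> real" where
  "total_cap N lam = (\<Sum>i\<in>{1..N}. lam i)"

definition poisson_graph :: "nat \<Rightarrow> (nat \<Rightarrow> real) \<Rightarrow> (nat \<times> nat \<Rightarrow> nat) pmf" where
  "poisson_graph N lam =
     Pi_pmf (node_pairs N) 0
       (\<lambda>(i, j). poisson_pmf (lam i * lam j / total_cap N lam))"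

definition edges :: "(nat \<times> nat \<Rightarrow> nat) \<Rightarrow> nat \<Rightarrow> nat \<Rightarrow> nat" where
  "edges g i j = g (min i j, max i j)"

text \<open>Closed neighbourhood N_k = {j. d(a,j) \<le> k}, via graph distance.\<close>
fun nbhd :: "nat \<Rightarrow> (nat \<times> nat \<Rightarrow> nat) \<Rightarrow> nat \<Rightarrow> nat \<Rightarrow> nat set" where
  "nbhd N g a 0 = {a}"
| "nbhd N g a (Suc k) = nbhd N g a k \<union>
     {j \<in> {1..N}. \<exists>i\<in>nbhd N g a k. i \<noteq> j \<and> edges g i j > 0}"

definition sphere_nbhd :: "nat \<Rightarrow> (nat \<times> nat \<Rightarrow> nat) \<Rightarrow> nat \<Rightarrow> nat \<Rightarrow> nat set" where
  "sphere_nbhd N g a k =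
     (case k of 0 \<Rightarrow> nbhd N g a 0 | Suc m \<Rightarrow> nbhd N g a (Suc m) - nbhd N g a m)"

definition edges_between :: "(nat \<times> nat \<Rightarrow> nat) \<Rightarrow> nat set \<Rightarrow> nat set \<Rightarrow> nat" where
  "edges_between g X Y = (\<Sum>i\<in>X. \<Sum>j\<in>Y. edges g i j)"

end

theory Submission
  imports Defs
begin

text \<open>On the conditioning event the two spheres are the fixed sets \<open>sphere_of S1 k\<close> and
  \<open>sphere_of S2 t\<close>. The ball of radius m is determined by the edges incident to the balls of
  smaller radius, and the balls of radius below k (resp. t) avoid both spheres; so the conditioning
  event depends only on the edge counts outside the node pairs between the two spheres and is
  independent of the counts on those pairs. These are independent Poisson variables, so their total
  is Poisson with mean the sum of \<open>\<lambda>i \<lambda>j / l_N\<close> over i and j in the two spheres, which factorises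
  as \<open>C1 C2 / l_N\<close>.\<close>

lemma measure_pmf_prob_pair_pmf_times:
  "measure_pmf.prob (pair_pmf M N) (A \<times> B) = measure_pmf.prob M A * measure_pmf.prob N B"
proof -
  have "measure_pmf.prob (pair_pmf M N) (A \<times> B) =
        measure_pmf.prob (pair_pmf M N) ((A \<times> B) \<inter> set_pmf (pair_pmf M N))"
    by (rule measure_Int_set_pmf[symmetric])
  also have "(A \<times> B) \<inter> set_pmf (pair_pmf M N) = (A \<inter> set_pmf M) \<times> (B \<inter> set_pmf N)"
    by auto
  also have "measure_pmf.prob (pair_pmf M N) \<dots> =
      measure_pmf.prob M (A \<inter> set_pmf M) * measure_pmf.prob N (B \<inter> set_pmf N)"
    by (intro measure_pmf_prob_product) auto
  finally show ?thesis by (simp add: measure_Int_set_pmf)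
qed

lemma prob_Pi_pmf_union_indep:
  fixes P Q :: "('a \<Rightarrow> 'b) \<Rightarrow> bool"
  assumes fin: "finite A" "finite B" and disj: "A \<inter> B = {}"
    and P: "\<And>f g. \<forall>x\<in>A. f x = g x \<Longrightarrow> P f = P g"
    and Q: "\<And>f g. \<forall>x\<in>B. f x = g x \<Longrightarrow> Q f = Q g"
  shows "measure_pmf.prob (Pi_pmf (A \<union> B) d p) {f. P f \<and> Q f} =
         measure_pmf.prob (Pi_pmf A d p) {f. P f} * measure_pmf.prob (Pi_pmf B d p) {f. Q f}"
proof -
  let ?merge = "\<lambda>(f, g) x. if x \<in> A then f x else g x"
  have "P (?merge (f, g)) = P f" "Q (?merge (f, g)) = Q g" for f g
    using disj by (auto intro!: P Q)
  then have "?merge -` {f. P f \<and> Q f} = {f. P f} \<times> {g. Q g}"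
    by auto
  then show ?thesis
    by (simp add: Pi_pmf_union[OF fin disj] measure_pmf_prob_pair_pmf_times)
qed

corollary cond_prob_Pi_pmf_union_indep:
  fixes P Q :: "('a \<Rightarrow> 'b) \<Rightarrow> bool"
  assumes "finite A" "finite B" "A \<inter> B = {}"
    and "\<And>f g. \<forall>x\<in>A. f x = g x \<Longrightarrow> P f = P g"
    and "\<And>f g. \<forall>x\<in>B. f x = g x \<Longrightarrow> Q f = Q g"
    and pos: "measure_pmf.prob (Pi_pmf (A \<union> B) d p) {f. P f} \<noteq> 0"
  shows "measure_pmf.prob (Pi_pmf (A \<union> B) d p) {f. P f \<and> Q f} /
         measure_pmf.prob (Pi_pmf (A \<union> B) d p) {f. P f} = measure_pmf.prob (Pi_pmf B d p) {f. Q f}"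
proof -
  have "measure_pmf.prob (Pi_pmf (A \<union> B) d p) {f. P f} = measure_pmf.prob (Pi_pmf A d p) {f. P f}"
    using prob_Pi_pmf_union_indep[OF assms(1-4), where Q = "\<lambda>_. True"] by simp
  then show ?thesis
    using pos by (simp add: prob_Pi_pmf_union_indep[OF assms(1-5)])
qed

lemma poisson_pmf_add:
  assumes a: "(a::real) > 0" and b: "b > 0"
  shows "map_pmf (\<lambda>(u, v). u + v) (pair_pmf (poisson_pmf a) (poisson_pmf b)) = poisson_pmf (a + b)"
proof (rule pmf_eqI)
  fix n :: nat
  let ?M = "pair_pmf (poisson_pmf a) (poisson_pmf b)"
  have "pmf (map_pmf (\<lambda>(u, v). u + v) ?M) n = measure_pmf.prob ?M ((\<lambda>(u, v). u + v) -` {n})"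
    by (rule pmf_map)
  also have "(\<lambda>(u, v). u + v) -` {n} = (\<lambda>u. (u, n - u)) ` {..n}"
    by (force simp: image_iff)
  also have "measure_pmf.prob ?M \<dots> = (\<Sum>u\<le>n. pmf ?M (u, n - u))"
    by (subst measure_measure_pmf_finite) (auto simp: sum.reindex inj_on_def)
  also have "\<dots> = (\<Sum>u\<le>n. of_nat (n choose u) * a ^ u * b ^ (n - u)) / fact n * exp (- (a + b))"
    unfolding sum_divide_distrib sum_distrib_right
  proof (intro sum.cong refl)
    fix u assume "u \<in> {..n}"
    then show "pmf ?M (u, n - u) = of_nat (n choose u) * a ^ u * b ^ (n - u) / fact n * exp (- (a + b))"
      using a b by (simp add: pmf_pair binomial_fact exp_add[symmetric] field_simps)
  qed
  also have "\<dots> = pmf (poisson_pmf (a + b)) n"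
    using a b by (simp add: binomial_ring[symmetric] add.commute)
  finally show "pmf (map_pmf (\<lambda>(u, v). u + v) ?M) n = pmf (poisson_pmf (a + b)) n" .
qed

lemma Pi_pmf_sum_poisson:
  assumes "finite B" "B \<noteq> {}"
    and "\<And>x. x \<in> B \<Longrightarrow> p x = poisson_pmf (r x)" and "\<And>x. x \<in> B \<Longrightarrow> r x > 0"
  shows "map_pmf (\<lambda>f. \<Sum>x\<in>B. f x) (Pi_pmf B d p) = poisson_pmf (\<Sum>x\<in>B. r x)"
  using assms
proof (induction B rule: finite_ne_induct)
  case (singleton x)
  then show ?case by (simp add: Pi_pmf_singleton pmf.map_comp o_def)
next
  case (insert x F)
  have "map_pmf (\<lambda>f. \<Sum>y\<in>insert x F. f y) (Pi_pmf (insert x F) d p) =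
        map_pmf (\<lambda>(u, v). u + v) (pair_pmf (p x) (map_pmf (\<lambda>f. \<Sum>y\<in>F. f y) (Pi_pmf F d p)))"
  proof -
    have "(\<Sum>y\<in>F. if y = x then u else f y) = (\<Sum>y\<in>F. f y)" for f :: "'a \<Rightarrow> nat" and u
      using insert.hyps by (intro sum.cong) auto
    then show ?thesis
      using insert.hyps
      by (simp add: Pi_pmf_insert pmf.map_comp o_def pair_map_pmf2 case_prod_beta)
  qed
  also have "\<dots> = poisson_pmf (\<Sum>y\<in>insert x F. r y)"
    using insert by (simp add: poisson_pmf_add sum_pos)
  finally show ?case .
qed

lemma prob_sum_Pi_pmf_poisson:
  assumes "finite B"
    and "\<And>x. x \<in> B \<Longrightarrow> p x = poisson_pmf (r x)" and "\<And>x. x \<in> B \<Longrightarrow> r x > 0"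
  shows "measure_pmf.prob (Pi_pmf B d p) {f. (\<Sum>x\<in>B. f x) = n} =
         (\<Sum>x\<in>B. r x) ^ n / fact n * exp (- (\<Sum>x\<in>B. r x))"
proof (cases "B = {}")
  case True
  then show ?thesis by (simp add: pmf_Pi_empty indicator_def)
next
  case False
  have "measure_pmf.prob (Pi_pmf B d p) {f. (\<Sum>x\<in>B. f x) = n} =
        pmf (map_pmf (\<lambda>f. \<Sum>x\<in>B. f x) (Pi_pmf B d p)) n"
    by (simp add: pmf_map vimage_def)
  also have "\<dots> = pmf (poisson_pmf (\<Sum>x\<in>B. r x)) n"
    by (simp only: Pi_pmf_sum_poisson[OF assms(1) False assms(2,3)])
  finally show ?thesis
    using assms False by (simp add: sum_pos)
qed

lemma finite_node_pairs: "finite (node_pairs N)"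
  by (rule finite_subset[of _ "{1..N} \<times> {1..N}"]) (auto simp: node_pairs_def)

lemma total_cap_pos: "\<forall>i\<in>{1..N}. lam i > 0 \<Longrightarrow> a \<in> {1..N} \<Longrightarrow> total_cap N lam > 0"
  unfolding total_cap_def by (intro sum_pos) auto

lemma nbhd_subset_nodes: "a \<in> {1..N} \<Longrightarrow> nbhd N g a m \<subseteq> {1..N}"
  by (induction m) auto

lemma nbhd_mono: "m \<le> m' \<Longrightarrow> nbhd N g a m \<subseteq> nbhd N g a m'"
  by (induction rule: dec_induct) auto

lemma nbhd_Int_sphere_nbhd: "m < k \<Longrightarrow> nbhd N g a m \<inter> sphere_nbhd N g a k = {}"
  using nbhd_mono[of m "k - 1" N g a] by (cases k) (auto simp: sphere_nbhd_def)

definition sphere_of :: "(nat \<Rightarrow> nat set) \<Rightarrow> nat \<Rightarrow> nat set" where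
  "sphere_of S k = (case k of 0 \<Rightarrow> S 0 | Suc m \<Rightarrow> S (Suc m) - S m)"

lemma sphere_of_subset: "sphere_of S k \<subseteq> S k"
  by (cases k) (auto simp: sphere_of_def)

lemma sphere_of_disjoint: "S k \<inter> T t = {} \<Longrightarrow> sphere_of S k \<inter> sphere_of T t = {}"
  using sphere_of_subset[of S k] sphere_of_subset[of T t] by blast

lemma sphere_nbhd_eq_sphere_of: "\<forall>m\<le>k. nbhd N g a m = S m \<Longrightarrow> sphere_nbhd N g a k = sphere_of S k"
  by (cases k) (simp_all add: sphere_nbhd_def sphere_of_def del: nbhd.simps)

lemma nbhd_cong:
  assumes "\<And>m' i j. m' < m \<Longrightarrow> i \<in> nbhd N g a m' \<Longrightarrow> j \<in> {1..N} \<Longrightarrow> i \<noteq> j \<Longrightarrow>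
      edges g i j = edges g' i j"
  shows "nbhd N g' a m = nbhd N g a m"
  using assms
proof (induction m)
  case (Suc m)
  then have IH: "nbhd N g' a m = nbhd N g a m"
    by (metis less_SucI)
  have "edges g' i j = edges g i j" if "i \<in> nbhd N g a m" "j \<in> {1..N}" "i \<noteq> j" for i j
    using Suc.prems that by (metis lessI)
  then show ?case
    using IH by auto
qed simp

definition cross_pairs :: "nat set \<Rightarrow> nat set \<Rightarrow> (nat \<times> nat) set" where
  "cross_pairs X Y = (\<lambda>(i, j). (min i j, max i j)) ` (X \<times> Y)"

lemma cross_pairsE:
  assumes "x \<in> cross_pairs X Y"
  obtains i j where "i \<in> X" "j \<in> Y" "x = (min i j, max i j)"
  using assms by (auto simp: cross_pairs_def)

lemma min_max_pair_eqD: "(min i j, max i j) = (min a b, max (a::nat) b) \<Longrightarrow> i = a \<or> i = b"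
  by (auto simp: min_def max_def split: if_splits)

lemma cross_pairs_subset_commute: "cross_pairs X Y \<subseteq> cross_pairs Y X"
proof
  fix x assume "x \<in> cross_pairs X Y"
  then obtain i j where "i \<in> X" "j \<in> Y" "x = (min j i, max j i)"
    by (auto elim: cross_pairsE simp: min.commute max.commute)
  then show "x \<in> cross_pairs Y X"
    unfolding cross_pairs_def by force
qed

lemma cross_pairs_commute: "cross_pairs X Y = cross_pairs Y X"
  by (intro subset_antisym cross_pairs_subset_commute)

lemma mem_cross_pairsD:
  assumes "(min i j, max i j) \<in> cross_pairs X Y"
  shows "i \<in> X \<union> Y"
proof -
  obtain a b where "a \<in> X" "b \<in> Y" "(min i j, max i j) = (min a b, max a b)"
    using assms by (rule cross_pairsE)
  then show ?thesis by (metis UnI1 UnI2 min_max_pair_eqD)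
qed

lemma cross_pairs_subset_node_pairs:
  assumes "X \<subseteq> {1..N}" "Y \<subseteq> {1..N}" "X \<inter> Y = {}"
  shows "cross_pairs X Y \<subseteq> node_pairs N"
proof
  fix x assume "x \<in> cross_pairs X Y"
  then obtain i j where "i \<in> X" "j \<in> Y" "x = (min i j, max i j)"
    by (rule cross_pairsE)
  with assms show "x \<in> node_pairs N"
    by (auto simp: node_pairs_def min_def max_def)
qed

lemma inj_on_min_max_pair:
  assumes "X \<inter> Y = {}"
  shows "inj_on (\<lambda>(i, j). (min i j, max (i::nat) j)) (X \<times> Y)"
  using assms unfolding inj_on_def by (auto simp: min_def max_def split: if_splits)

lemma sum_cross_pairs:
  "X \<inter> Y = {} \<Longrightarrow> (\<Sum>x\<in>cross_pairs X Y. h x) = (\<Sum>i\<in>X. \<Sum>j\<in>Y. h (min i j, max i j))"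
  by (simp add: cross_pairs_def sum.reindex inj_on_min_max_pair sum.cartesian_product prod.case_distrib)

lemma sum_cross_pairs_product:
  fixes lam :: "nat \<Rightarrow> real"
  assumes "X \<inter> Y = {}"
  shows "(\<Sum>(i, j)\<in>cross_pairs X Y. lam i * lam j / c) = (\<Sum>i\<in>X. lam i) * (\<Sum>j\<in>Y. lam j) / c"
proof -
  have "lam (min i j) * lam (max i j) = lam i * lam j" for i j
    by (cases "i \<le> j") (simp_all add: min_def max_def mult.commute)
  then show ?thesis
    using assms by (simp add: sum_cross_pairs sum_product sum_divide_distrib)
qed

lemma edges_between_eq_sum_cross_pairs:
  "X \<inter> Y = {} \<Longrightarrow> edges_between g X Y = (\<Sum>x\<in>cross_pairs X Y. g x)"
  by (simp add: sum_cross_pairs edges_between_def edges_def)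

lemma nbhds_cong_off_cross_pairs:
  assumes a: "a \<in> {1..N}"
    and S: "\<forall>m\<le>k. nbhd N g a m = S m"
    and disj: "S k \<inter> T = {}"
    and agree: "\<forall>x\<in>node_pairs N - cross_pairs (sphere_nbhd N g a k) T. g x = g' x"
  shows "\<forall>m\<le>k. nbhd N g' a m = S m"
proof (intro allI impI)
  fix m assume "m \<le> k"
  have "nbhd N g' a m = nbhd N g a m"
  proof (rule nbhd_cong)
    fix m' i j
    assume m': "m' < m" and i: "i \<in> nbhd N g a m'" and j: "j \<in> {1..N}" and "i \<noteq> j"
    have "i \<notin> sphere_nbhd N g a k"
      using nbhd_Int_sphere_nbhd[of m' k] m' \<open>m \<le> k\<close> i by auto
    moreover have "i \<notin> T"
      using nbhd_mono[of m' k N g a] m' \<open>m \<le> k\<close> i S disj by auto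
    moreover have "(min i j, max i j) \<in> node_pairs N"
      using nbhd_subset_nodes[OF a, of g m'] i j \<open>i \<noteq> j\<close>
      by (auto simp: node_pairs_def min_def max_def)
    ultimately show "edges g i j = edges g' i j"
      using agree by (auto simp: edges_def dest: mem_cross_pairsD)
  qed
  with S \<open>m \<le> k\<close> show "nbhd N g' a m = S m" by simp
qed

lemma nbhds_eq_iff_off_sphere_pairs:
  assumes a: "a \<in> {1..N}" and b: "b \<in> {1..N}" and disj: "S k \<inter> T t = {}"
    and agree: "\<forall>x\<in>node_pairs N - cross_pairs (sphere_of S k) (sphere_of T t). g x = g' x"
  shows "(\<forall>m\<le>k. nbhd N g a m = S m) \<and> (\<forall>m\<le>t. nbhd N g b m = T m) \<longleftrightarrow>
         (\<forall>m\<le>k. nbhd N g' a m = S m) \<and> (\<forall>m\<le>t. nbhd N g' b m = T m)"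
proof -
  have "S k \<inter> sphere_of T t = {}" "T t \<inter> sphere_of S k = {}"
    using disj sphere_of_subset[of S k] sphere_of_subset[of T t] by auto
  then have "(\<forall>m\<le>k. nbhd N h' a m = S m) \<and> (\<forall>m\<le>t. nbhd N h' b m = T m)"
    if S: "\<forall>m\<le>k. nbhd N h a m = S m" and T: "\<forall>m\<le>t. nbhd N h b m = T m"
      and "\<forall>x\<in>node_pairs N - cross_pairs (sphere_of S k) (sphere_of T t). h x = h' x" for h h'
    using that nbhds_cong_off_cross_pairs[OF a S] nbhds_cong_off_cross_pairs[OF b T]
    by (simp add: sphere_nbhd_eq_sphere_of[OF S] sphere_nbhd_eq_sphere_of[OF T] cross_pairs_commute)
  moreover have "\<forall>x\<in>node_pairs N - cross_pairs (sphere_of S k) (sphere_of T t). g' x = g x"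
    using agree by simp
  ultimately show ?thesis
    using agree by blast
qed

lemma cross_pairs_spheres_subset_node_pairs:
  assumes "a \<in> {1..N}" "b \<in> {1..N}" "S k \<inter> T t = {}"
    and "\<forall>m\<le>k. nbhd N g a m = S m" "\<forall>m\<le>t. nbhd N g b m = T m"
  shows "cross_pairs (sphere_of S k) (sphere_of T t) \<subseteq> node_pairs N"
proof (rule cross_pairs_subset_node_pairs)
  show "sphere_of S k \<subseteq> {1..N}" "sphere_of T t \<subseteq> {1..N}"
    using assms(1,2,4,5) nbhd_subset_nodes sphere_of_subset[of S k] sphere_of_subset[of T t] by blast+
qed (rule sphere_of_disjoint[of S k T t, OF assms(3)])

lemma edges_between_spheres:
  assumes "S k \<inter> T t = {}"
    and "\<forall>m\<le>k. nbhd N g a m = S m" "\<forall>m\<le>t. nbhd N g b m = T m"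
  shows "edges_between g (sphere_nbhd N g a k) (sphere_nbhd N g b t) =
         (\<Sum>x\<in>cross_pairs (sphere_of S k) (sphere_of T t). g x)"
  unfolding sphere_nbhd_eq_sphere_of[OF assms(2)] sphere_nbhd_eq_sphere_of[OF assms(3)]
  by (rule edges_between_eq_sum_cross_pairs[OF sphere_of_disjoint[of S k T t, OF assms(1)]])

lemma cond_prob_poisson_graph_sum:
  fixes E :: "(nat \<times> nat \<Rightarrow> nat) \<Rightarrow> bool"
  assumes cap_pos: "\<forall>i\<in>{1..N}. lam i > 0" and B_pairs: "B \<subseteq> node_pairs N"
    and E_cong: "\<And>g g'. \<forall>x\<in>node_pairs N - B. g x = g' x \<Longrightarrow> E g = E g'"
    and pos: "measure_pmf.prob (poisson_graph N lam) {g. E g} \<noteq> 0"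
  defines "mu \<equiv> \<Sum>(i, j)\<in>B. lam i * lam j / total_cap N lam"
  shows "measure_pmf.prob (poisson_graph N lam) {g. E g \<and> (\<Sum>x\<in>B. g x) = n} /
         measure_pmf.prob (poisson_graph N lam) {g. E g} = mu ^ n / fact n * exp (- mu)"
proof -
  define rate where "rate = (\<lambda>(i, j). lam i * lam j / total_cap N lam)"
  have graph: "poisson_graph N lam = Pi_pmf ((node_pairs N - B) \<union> B) 0 (\<lambda>x. poisson_pmf (rate x))"
    using B_pairs by (simp add: poisson_graph_def rate_def Un_absorb2 case_prod_unfold)
  have finB: "finite B"
    using finite_subset[OF B_pairs finite_node_pairs] .
  have "measure_pmf.prob (poisson_graph N lam) {g. E g \<and> (\<Sum>x\<in>B. g x) = n} /
        measure_pmf.prob (poisson_graph N lam) {g. E g}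
      = measure_pmf.prob (Pi_pmf B 0 (\<lambda>x. poisson_pmf (rate x))) {g. (\<Sum>x\<in>B. g x) = n}"
    unfolding graph
  proof (rule cond_prob_Pi_pmf_union_indep)
    show "((\<Sum>x\<in>B. g x) = n) = ((\<Sum>x\<in>B. g' x) = n)" if "\<forall>x\<in>B. g x = g' x"
      for g g' :: "nat \<times> nat \<Rightarrow> nat"
      using that by (metis sum.cong)
  qed (use finite_node_pairs finB E_cong pos[unfolded graph] in auto)
  also have "\<dots> = mu ^ n / fact n * exp (- mu)"
    unfolding mu_def rate_def[symmetric]
  proof (rule prob_sum_Pi_pmf_poisson[OF finB])
    show "rate x > 0" if xB: "x \<in> B" for x
    proof -
      obtain i j where "x = (i, j)" "i \<in> {1..N}" "j \<in> {1..N}"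
        using xB B_pairs by (auto simp: node_pairs_def)
      then show ?thesis
        using cap_pos total_cap_pos[OF cap_pos] by (simp add: rate_def)
    qed
  qed (simp add: rate_def)
  finally show ?thesis .
qed

theorem lemma3p3:
  fixes N :: nat and lam :: "nat \<Rightarrow> real" and A1 A2 k t :: nat
    and S1 S2 :: "nat \<Rightarrow> nat set" and n :: nat
  assumes cap_pos: "\<forall>i\<in>{1..N}. lam i > 0"
    and A1: "A1 \<in> {1..N}" and A2: "A2 \<in> {1..N}" and distinct: "A1 \<noteq> A2"
    and disj: "S1 k \<inter> S2 t = {}"
    and pos: "measure_pmf.prob (poisson_graph N lam)
               {g. (\<forall>m\<le>k. nbhd N g A1 m = S1 m) \<and> (\<forall>m\<le>t. nbhd N g A2 m = S2 m)} > 0"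
  shows "measure_pmf.prob (poisson_graph N lam)
           {g. (\<forall>m\<le>k. nbhd N g A1 m = S1 m) \<and> (\<forall>m\<le>t. nbhd N g A2 m = S2 m)
               \<and> edges_between g (sphere_nbhd N g A1 k) (sphere_nbhd N g A2 t) = n}
         / measure_pmf.prob (poisson_graph N lam)
           {g. (\<forall>m\<le>k. nbhd N g A1 m = S1 m) \<and> (\<forall>m\<le>t. nbhd N g A2 m = S2 m)}
       = (let C1 = (\<Sum>i\<in>(case k of 0 \<Rightarrow> S1 0 | Suc m \<Rightarrow> S1 (Suc m) - S1 m). lam i);
              C2 = (\<Sum>j\<in>(case t of 0 \<Rightarrow> S2 0 | Suc m \<Rightarrow> S2 (Suc m) - S2 m). lam j);
              mu = C1 * C2 / total_cap N lam
          in mu ^ n / fact n * exp (- mu))"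
proof -
  define E where "E g \<longleftrightarrow> (\<forall>m\<le>k. nbhd N g A1 m = S1 m) \<and> (\<forall>m\<le>t. nbhd N g A2 m = S2 m)" for g
  define B where "B = cross_pairs (sphere_of S1 k) (sphere_of S2 t)"
  have E_pos: "measure_pmf.prob (poisson_graph N lam) {g. E g} \<noteq> 0"
    using pos unfolding E_def by simp
  then obtain g0 where "E g0"
    by (metis Collect_empty_eq measure_empty)
  then have B_pairs: "B \<subseteq> node_pairs N"
    unfolding E_def B_def
    by (elim conjE) (rule cross_pairs_spheres_subset_node_pairs[where S = S1 and T = S2, OF A1 A2 disj])
  have E_cong: "E g = E g'" if "\<forall>x\<in>node_pairs N - B. g x = g' x" for g g'
    using nbhds_eq_iff_off_sphere_pairs[OF A1 A2 disj that[unfolded B_def]] unfolding E_def .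
  have "edges_between g (sphere_nbhd N g A1 k) (sphere_nbhd N g A2 t) = (\<Sum>x\<in>B. g x)" if "E g" for g
    using that unfolding E_def B_def
    by (elim conjE) (rule edges_between_spheres[where S = S1 and T = S2, OF disj])
  then have event: "{g. E g \<and> edges_between g (sphere_nbhd N g A1 k) (sphere_nbhd N g A2 t) = n} =
      {g. E g \<and> (\<Sum>x\<in>B. g x) = n}"
    by auto
  define mu where "mu = (\<Sum>i\<in>sphere_of S1 k. lam i) * (\<Sum>j\<in>sphere_of S2 t. lam j) / total_cap N lam"
  have "mu = (\<Sum>(i, j)\<in>B. lam i * lam j / total_cap N lam)"
    unfolding mu_def B_def sum_cross_pairs_product[OF sphere_of_disjoint[of S1 k S2 t, OF disj]] ..
  then have "measure_pmf.prob (poisson_graph N lam) {g. E g \<and> (\<Sum>x\<in>B. g x) = n} /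
      measure_pmf.prob (poisson_graph N lam) {g. E g} = mu ^ n / fact n * exp (- mu)"
    using cond_prob_poisson_graph_sum[OF cap_pos B_pairs E_cong E_pos] by simp
  then show ?thesis
    unfolding event[symmetric] unfolding E_def mu_def sphere_of_def Let_def conj_assoc .
qed

end
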